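(* In the unit-cost arithmetic model, given integers $n\ge1$, $k\ge0$ and $0\le i<\binom{n-1+k}{k}$, the multiset of rank $i$ among all multisets of $k$ elements from $\{0,\dots,n-1\}$ (ordered lexicographically by their non-increasing element sequences, zero-based ranks) can be computed in $O(k^2\log n)$ time.
   Context: Each multiset is represented by the sequence of its elements in non-increasing order; multisets are ordered lexicographically by these sequences, and ranks start at $0$. Arithmetic operations on integers are assumed to take constant time. *)

theory Defs
  imports Complex_Main
begin

type_synonym vname = nat
type_synonym aname = nat
type_synonym state = "(vname \<Rightarrow> int) \<times> (aname \<Rightarrow> int \<Rightarrow> int)"

datatype aexp =
    N int
  | V vname
  | Rd aname aexp
  | Plus aexp aexp
  | Minus aexp aexp
  | Times aexp aexp
  | Div aexp aexp
  | Mod aexp aexp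

datatype bexp =
    Bc bool
  | Not bexp
  | And bexp bexp
  | Less aexp aexp
  | Eq aexp aexp

datatype com =
    SKIP
  | Assign vname aexp
  | AssignArr aname aexp aexp
  | Seq com com
  | If bexp com com
  | While bexp com

fun aval :: "aexp \<Rightarrow> state \<Rightarrow> int" where
  "aval (N c) s = c"
| "aval (V x) s = fst s x"
| "aval (Rd a e) s = snd s a (aval e s)"
| "aval (Plus e1 e2) s = aval e1 s + aval e2 s"
| "aval (Minus e1 e2) s = aval e1 s - aval e2 s"
| "aval (Times e1 e2) s = aval e1 s * aval e2 s"
| "aval (Div e1 e2) s = aval e1 s div aval e2 s"
| "aval (Mod e1 e2) s = aval e1 s mod aval e2 s"

fun bval :: "bexp \<Rightarrow> state \<Rightarrow> bool" where
  "bval (Bc b) s = b"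
| "bval (Not b) s = (\<not> bval b s)"
| "bval (And b1 b2) s = (bval b1 s \<and> bval b2 s)"
| "bval (Less e1 e2) s = (aval e1 s < aval e2 s)"
| "bval (Eq e1 e2) s = (aval e1 s = aval e2 s)"

fun acost :: "aexp \<Rightarrow> nat" where
  "acost (N c) = 1"
| "acost (V x) = 1"
| "acost (Rd a e) = 1 + acost e"
| "acost (Plus e1 e2) = 1 + acost e1 + acost e2"
| "acost (Minus e1 e2) = 1 + acost e1 + acost e2"
| "acost (Times e1 e2) = 1 + acost e1 + acost e2"
| "acost (Div e1 e2) = 1 + acost e1 + acost e2"
| "acost (Mod e1 e2) = 1 + acost e1 + acost e2"

fun bcost :: "bexp \<Rightarrow> nat" where
  "bcost (Bc b) = 1"
| "bcost (Not b) = 1 + bcost b"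
| "bcost (And b1 b2) = 1 + bcost b1 + bcost b2"
| "bcost (Less e1 e2) = 1 + acost e1 + acost e2"
| "bcost (Eq e1 e2) = 1 + acost e1 + acost e2"

inductive big_step :: "com \<times> state \<Rightarrow> nat \<Rightarrow> state \<Rightarrow> bool" where
  Skip: "big_step (SKIP, s) 1 s"
| Assign: "big_step (Assign x e, s) (1 + acost e) ((fst s)(x := aval e s), snd s)"
| AssignArr: "big_step (AssignArr a ei e, s) (1 + acost ei + acost e)
      (fst s, (snd s)(a := (snd s a)(aval ei s := aval e s)))"
| Seq: "big_step (c1, s1) t1 s2 \<Longrightarrow> big_step (c2, s2) t2 s3 \<Longrightarrow>
      big_step (Seq c1 c2, s1) (t1 + t2 + 1) s3"
| IfTrue: "bval b s \<Longrightarrow> big_step (c1, s) t s' \<Longrightarrow>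
      big_step (If b c1 c2, s) (t + bcost b + 1) s'"
| IfFalse: "\<not> bval b s \<Longrightarrow> big_step (c2, s) t s' \<Longrightarrow>
      big_step (If b c1 c2, s) (t + bcost b + 1) s'"
| WhileFalse: "\<not> bval b s \<Longrightarrow> big_step (While b c, s) (bcost b + 1) s"
| WhileTrue: "bval b s1 \<Longrightarrow> big_step (c, s1) t1 s2 \<Longrightarrow>
      big_step (While b c, s2) t2 s3 \<Longrightarrow>
      big_step (While b c, s1) (t1 + t2 + bcost b + 1) s3"

definition init_state :: "nat \<Rightarrow> nat \<Rightarrow> nat \<Rightarrow> state" where
  "init_state n k i =
     ((\<lambda>_. 0)(0 := int n, 1 := int k, 2 := int i), (\<lambda>_ _. 0))"

definition output_seq :: "nat \<Rightarrow> state \<Rightarrow> int list" where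
  "output_seq k s = map (\<lambda>j. snd s 0 (int j)) [0..<k]"

text \<open>Multisets of k elements from {0,...,n-1}, represented by the sequence of
  their elements in non-increasing order.\<close>

definition msets_seq :: "nat \<Rightarrow> nat \<Rightarrow> int list set" where
  "msets_seq n k = {xs. length xs = k \<and> sorted_wrt (\<ge>) xs \<and> set xs \<subseteq> {0..<int n}}"

definition mset_rank :: "nat \<Rightarrow> nat \<Rightarrow> int list \<Rightarrow> nat" where
  "mset_rank n k ys = card {xs \<in> msets_seq n k. (xs, ys) \<in> lexord {(a, b). a < b}}"

end

theory Submission
  imports Defs "HOL-Library.Discrete_Functions"
begin

text \<open>There are exactly \<open>multichoose a k = (a + k - 1 choose k)\<close> multisets of size \<open>k\<close> with all
  elements below \<open>a\<close>, and these are precisely the ones ranked before every multiset whose largest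
  element is \<open>a\<close>. Hence the largest element of the multiset of rank \<open>i\<close> is the largest
  \<open>a < n\<close> with \<open>multichoose a k \<le> i\<close>, and the remaining \<open>k - 1\<close> elements form the multiset of
  rank \<open>i - multichoose a k\<close> among those with elements in \<open>{0..a}\<close>. The program finds \<open>a\<close> by
  binary search, i.e. with \<open>O(log n)\<close> evaluations of \<open>multichoose a k\<close>, each costing \<open>O(k)\<close>
  exact multiplications and divisions, and repeats this for all \<open>k\<close> positions.\<close>

section \<open>Counting multisets\<close>

definition multichoose :: "nat \<Rightarrow> nat \<Rightarrow> nat" where
  "multichoose n k = (n + k - 1) choose k"

lemma multichoose_0_right [simp]: "multichoose n 0 = 1"
  by (simp add: multichoose_def)

lemma multichoose_0_left [simp]: "k \<noteq> 0 \<Longrightarrow> multichoose 0 k = 0"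
  by (simp add: multichoose_def)

lemma multichoose_Suc_Suc:
  "multichoose (Suc n) (Suc k) = multichoose n (Suc k) + multichoose (Suc n) k"
  by (simp add: multichoose_def)

lemma sum_multichoose: "(\<Sum>a<n. multichoose (Suc a) k) = multichoose n (Suc k)"
  by (induction n) (simp_all add: multichoose_Suc_Suc)

text \<open>The division is exact, so \<open>multichoose n k\<close> can be computed with integer division.\<close>

lemma multichoose_Suc_right:
  "int (multichoose n (Suc k)) = int (multichoose n k) * (int n + int k) div (int k + 1)"
proof -
  have "Suc k * multichoose n (Suc k) = (n + k) * multichoose n k"
    using Suc_times_binomial[of k "n + k - 1"] by (cases "n + k") (simp_all add: multichoose_def)
  then have "multichoose n (Suc k) = multichoose n k * (n + k) div Suc k"
    by (metis mult.commute nonzero_mult_div_cancel_left nat.distinct(1))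
  then show ?thesis
    by (simp add: zdiv_int add.commute flip: of_nat_mult of_nat_add)
qed

lemma msets_seq_0 [simp]: "msets_seq n 0 = {[]}"
  by (auto simp: msets_seq_def)

lemma msets_seq_Suc:
  "msets_seq n (Suc k) = (\<Union>a<n. Cons (int a) ` msets_seq (Suc a) k)"
proof (intro set_eqI iffI)
  fix xs assume "xs \<in> msets_seq n (Suc k)"
  then obtain x ys where xs: "xs = x # ys" and ys: "length ys = k" "sorted_wrt (\<ge>) (x # ys)"
    and x: "0 \<le> x" "x < int n" "set ys \<subseteq> {0..<int n}"
    unfolding msets_seq_def by (cases xs) auto
  then have "ys \<in> msets_seq (Suc (nat x)) k"
    unfolding msets_seq_def by (auto simp: subset_iff)
  with xs x show "xs \<in> (\<Union>a<n. Cons (int a) ` msets_seq (Suc a) k)"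
    by (auto intro!: bexI[of _ "nat x"])
next
  fix xs assume "xs \<in> (\<Union>a<n. Cons (int a) ` msets_seq (Suc a) k)"
  then obtain a ys where "a < n" "ys \<in> msets_seq (Suc a) k" "xs = int a # ys"
    by auto
  then show "xs \<in> msets_seq n (Suc k)"
    unfolding msets_seq_def by (auto simp: subset_iff)
qed

lemma finite_msets_seq: "finite (msets_seq n k)"
  by (induction k arbitrary: n) (simp_all add: msets_seq_Suc)

lemma card_msets_seq: "card (msets_seq n k) = multichoose n k"
proof (induction k arbitrary: n)
  case (Suc k)
  have "card (msets_seq n (Suc k)) = (\<Sum>a<n. card (Cons (int a) ` msets_seq (Suc a) k))"
    unfolding msets_seq_Suc by (rule card_UN_disjoint) (auto simp: finite_msets_seq)
  also have "\<dots> = multichoose n (Suc k)"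
    by (simp add: card_image Suc sum_multichoose)
  finally show ?case .
qed simp

lemma mset_rank_Cons:
  assumes "a < n" "ys \<in> msets_seq (Suc a) k"
  shows "mset_rank n (Suc k) (int a # ys) = multichoose a (Suc k) + mset_rank (Suc a) k ys"
proof -
  let ?less = "lexord {(x :: int, y). x < y}"
  let ?A = "\<Union>b<a. Cons (int b) ` msets_seq (Suc b) k"
  let ?B = "Cons (int a) ` {zs \<in> msets_seq (Suc a) k. (zs, ys) \<in> ?less}"
  have split: "{xs \<in> msets_seq n (Suc k). (xs, int a # ys) \<in> ?less} = ?A \<union> ?B"
    using assms(1) unfolding msets_seq_Suc by (auto 4 3)
  have "card ?A = card (msets_seq a (Suc k))"
    using \<open>a < n\<close> by (simp add: msets_seq_Suc)
  moreover have "card ?B = mset_rank (Suc a) k ys"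
    unfolding mset_rank_def by (simp add: card_image)
  moreover have "card (?A \<union> ?B) = card ?A + card ?B"
    by (rule card_Un_disjoint) (auto simp: finite_msets_seq)
  ultimately show ?thesis
    unfolding mset_rank_def split by (simp add: card_msets_seq)
qed

lemma unrank_prefix_step:
  assumes "a < m" "multichoose a (Suc k) \<le> j" "Suc a = m \<or> j < multichoose (Suc a) (Suc k)"
    and "j < multichoose m (Suc k)"
    and "\<forall>ys\<in>msets_seq m (Suc k). mset_rank m (Suc k) ys = j \<longrightarrow> P (p @ ys)"
  shows "j - multichoose a (Suc k) < multichoose (Suc a) k"
    and "\<forall>ys\<in>msets_seq (Suc a) k. mset_rank (Suc a) k ys = j - multichoose a (Suc k)
           \<longrightarrow> P ((p @ [int a]) @ ys)"
proof -
  have "j < multichoose (Suc a) (Suc k)"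
    using assms(3,4) by auto
  then show "j - multichoose a (Suc k) < multichoose (Suc a) k"
    using assms(2) by (simp add: multichoose_Suc_Suc)
  show "\<forall>ys\<in>msets_seq (Suc a) k. mset_rank (Suc a) k ys = j - multichoose a (Suc k)
           \<longrightarrow> P ((p @ [int a]) @ ys)"
  proof (intro ballI impI)
    fix ys assume ys: "ys \<in> msets_seq (Suc a) k" "mset_rank (Suc a) k ys = j - multichoose a (Suc k)"
    have "int a # ys \<in> msets_seq m (Suc k)"
      using ys(1) assms(1) unfolding msets_seq_Suc by auto
    moreover have "mset_rank m (Suc k) (int a # ys) = j"
      using mset_rank_Cons[OF assms(1) ys(1)] ys(2) assms(2) by simp
    ultimately show "P ((p @ [int a]) @ ys)"
      using assms(5) by auto
  qed
qed

lemma mset_rank_Nil [simp]: "mset_rank n 0 [] = 0"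
  by (simp add: mset_rank_def)

section \<open>Hoare logic with time bounds\<close>

definition hoare_time :: "(state \<Rightarrow> bool) \<Rightarrow> com \<Rightarrow> (state \<Rightarrow> bool) \<Rightarrow> nat \<Rightarrow> bool" where
  "hoare_time P c Q T \<longleftrightarrow> (\<forall>s. P s \<longrightarrow> (\<exists>t s'. big_step (c, s) t s' \<and> Q s' \<and> t \<le> T))"

lemma hoare_time_pointwise:
  "(\<And>s0. P s0 \<Longrightarrow> hoare_time (\<lambda>s. s = s0) c Q T) \<Longrightarrow> hoare_time P c Q T"
  unfolding hoare_time_def by blast

lemma hoare_time_conseq:
  "hoare_time P c Q T \<Longrightarrow> (\<And>s. P' s \<Longrightarrow> P s) \<Longrightarrow> (\<And>s. Q s \<Longrightarrow> Q' s) \<Longrightarrow> T \<le> T'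
   \<Longrightarrow> hoare_time P' c Q' T'"
  unfolding hoare_time_def by (meson order.trans)

lemma hoare_time_Assign:
  "(\<And>s. P s \<Longrightarrow> Q ((fst s)(x := aval e s), snd s)) \<Longrightarrow> hoare_time P (Assign x e) Q (1 + acost e)"
  unfolding hoare_time_def by (metis big_step.Assign order.refl)

lemma hoare_time_Assign_wp:
  "hoare_time (\<lambda>s. Q ((fst s)(x := aval e s), snd s)) (Assign x e) Q (1 + acost e)"
  by (rule hoare_time_Assign)

lemma hoare_time_AssignArr:
  "(\<And>s. P s \<Longrightarrow> Q (fst s, (snd s)(a := (snd s a)(aval ei s := aval e s))))
   \<Longrightarrow> hoare_time P (AssignArr a ei e) Q (1 + acost ei + acost e)"
  unfolding hoare_time_def by (metis big_step.AssignArr order.refl)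

lemma hoare_time_Seq:
  assumes "hoare_time P c1 R T1" "hoare_time R c2 Q T2" "T1 + T2 + 1 \<le> T"
  shows "hoare_time P (Seq c1 c2) Q T"
  unfolding hoare_time_def
proof (intro allI impI)
  fix s assume "P s"
  with assms(1) obtain t1 s1 where 1: "big_step (c1, s) t1 s1" "R s1" "t1 \<le> T1"
    unfolding hoare_time_def by blast
  with assms(2) obtain t2 s2 where 2: "big_step (c2, s1) t2 s2" "Q s2" "t2 \<le> T2"
    unfolding hoare_time_def by blast
  have "t1 + t2 + 1 \<le> T"
    using 1(3) 2(3) assms(3) by linarith
  with big_step.Seq[OF 1(1) 2(1)] 2(2)
  show "\<exists>t s'. big_step (Seq c1 c2, s) t s' \<and> Q s' \<and> t \<le> T"
    by blast
qed

lemma hoare_time_If: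
  "hoare_time (\<lambda>s. P s \<and> bval b s) c1 Q T' \<Longrightarrow> hoare_time (\<lambda>s. P s \<and> \<not> bval b s) c2 Q T'
   \<Longrightarrow> T' + bcost b + 1 \<le> T \<Longrightarrow> hoare_time P (If b c1 c2) Q T"
  unfolding hoare_time_def by (metis add_le_mono1 big_step.IfFalse big_step.IfTrue order.trans)

lemma big_step_While_variant:
  assumes body: "\<And>v. hoare_time (\<lambda>s. I s \<and> bval b s \<and> \<mu> s = v) c (\<lambda>s. I s \<and> \<mu> s < v) T"
    and "I s"
  shows "\<exists>t s'. big_step (While b c, s) t s' \<and> I s' \<and> \<not> bval b s' \<and>
      t \<le> bcost b + 1 + \<mu> s * (T + bcost b + 1)"
  using \<open>I s\<close>
proof (induction "\<mu> s" arbitrary: s rule: less_induct)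
  case less
  show ?case
  proof (cases "bval b s")
    case False
    with big_step.WhileFalse[OF False] less.prems show ?thesis by fastforce
  next
    case True
    with body[of "\<mu> s"] less.prems obtain t1 s1
      where 1: "big_step (c, s) t1 s1" "I s1" "\<mu> s1 < \<mu> s" "t1 \<le> T"
      unfolding hoare_time_def by blast
    from less.hyps[OF 1(3,2)] obtain t2 s2 where 2: "big_step (While b c, s1) t2 s2"
      "I s2" "\<not> bval b s2" "t2 \<le> bcost b + 1 + \<mu> s1 * (T + bcost b + 1)"
      by blast
    have "(\<mu> s1 + 1) * (T + bcost b + 1) \<le> \<mu> s * (T + bcost b + 1)"
      using 1(3) by (intro mult_right_mono) auto
    then have "t1 + t2 + bcost b + 1 \<le> bcost b + 1 + \<mu> s * (T + bcost b + 1)"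
      using 1(4) 2(4) by (simp add: algebra_simps)
    with big_step.WhileTrue[OF True 1(1) 2(1)] 2(2,3) show ?thesis
      by blast
  qed
qed

lemma hoare_time_While:
  assumes "\<And>v. hoare_time (\<lambda>s. I s \<and> bval b s \<and> \<mu> s = v) c (\<lambda>s. I s \<and> \<mu> s < v) T"
    and "\<And>s. P s \<Longrightarrow> I s \<and> \<mu> s \<le> M"
    and "\<And>s. I s \<Longrightarrow> \<not> bval b s \<Longrightarrow> Q s"
    and "bcost b + 1 + M * (T + bcost b + 1) \<le> T'"
  shows "hoare_time P (While b c) Q T'"
  unfolding hoare_time_def
proof (intro allI impI)
  fix s assume "P s"
  with assms(2) have "I s" "\<mu> s \<le> M" by auto
  from big_step_While_variant[OF assms(1) \<open>I s\<close>] obtain t s'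
    where "big_step (While b c, s) t s'" "I s'" "\<not> bval b s'"
      "t \<le> bcost b + 1 + \<mu> s * (T + bcost b + 1)"
    by blast
  moreover have "\<mu> s * (T + bcost b + 1) \<le> M * (T + bcost b + 1)"
    using \<open>\<mu> s \<le> M\<close> by (rule mult_right_mono) simp
  ultimately show "\<exists>t s'. big_step (While b c, s) t s' \<and> Q s' \<and> t \<le> T'"
    using assms(3,4) by (meson add_left_mono order.trans)
qed

section \<open>Computing multiset coefficients\<close>

text \<open>Register layout of the programs: 0 holds the bound \<open>m\<close> (remaining elements are \<open>< m\<close>),
  1 the number \<open>K\<close> of elements still to emit, 2 the remaining rank, 3 the number of elements
  emitted so far (stored in array 0); 4, 5, 6 hold \<open>lo\<close>, \<open>hi\<close>, \<open>mid\<close> of the binary search;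
  \<open>binom_prog\<close> sets register 7 to \<open>multichoose x K\<close> for \<open>x\<close> in register 9, using 8 as counter.\<close>

definition binom_step :: com where
  "binom_step =
     Seq (Assign 7 (Div (Times (V 7) (Plus (V 9) (V 8))) (Plus (V 8) (N 1))))
         (Assign 8 (Plus (V 8) (N 1)))"

definition binom_prog :: com where
  "binom_prog = Seq (Assign 7 (N 1)) (Seq (Assign 8 (N 0)) (While (Less (V 8) (V 1)) binom_step))"

lemma binom_prog_spec:
  assumes "fst s0 9 = int x" "fst s0 1 = int k"
  shows "hoare_time (\<lambda>s. s = s0) binom_prog
           (\<lambda>s. s = ((fst s0)(7 := int (multichoose x k), 8 := int k), snd s0)) (10 + 20 * k)"
proof -
  define st where "st j = ((fst s0)(7 := int (multichoose x j), 8 := int j), snd s0)" for j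
  define I where "I s \<longleftrightarrow> (\<exists>j\<le>k. s = st j)" for s
  have step: "hoare_time (\<lambda>s. I s \<and> bval (Less (V 8) (V 1)) s \<and> k - nat (fst s 8) = v)
      binom_step (\<lambda>s. I s \<and> k - nat (fst s 8) < v) 15" for v
    unfolding binom_step_def
  proof (rule hoare_time_Seq[OF hoare_time_Assign hoare_time_Assign_wp], goal_cases)
    case (1 s)
    then obtain j where "j < k" "s = st j" "k - j = v"
      using assms by (auto simp: I_def st_def)
    then show ?case
      using assms by (auto simp: I_def st_def multichoose_Suc_right intro!: exI[of _ "Suc j"])
  qed simp
  have loop: "hoare_time (\<lambda>s. s = st 0) (While (Less (V 8) (V 1)) binom_step)
      (\<lambda>s. s = st k) (4 + 19 * k)"
    using assms by (intro hoare_time_While[OF step]) (auto simp: I_def st_def)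
  show ?thesis
    unfolding binom_prog_def
    by (rule hoare_time_Seq[OF hoare_time_Assign
          hoare_time_Seq[OF hoare_time_Assign_wp loop[unfolded st_def]]]) (auto simp: st_def)
qed


section \<open>Binary search for the largest element\<close>

lemma floor_log_double_less:
  assumes "m \<noteq> 0" "m' \<le> m div 2"
  shows "floor_log (2 * m') < floor_log (2 * m)"
proof (cases "m' = 0")
  case False
  then have "floor_log m' \<le> floor_log m - 1"
    using floor_log_le_iff[OF assms(2)] by simp
  moreover have "floor_log m \<noteq> 0"
    using assms False by (auto simp: floor_log.simps)
  ultimately show ?thesis
    using assms False by simp
qed (use assms in simp)

lemma floor_log_le_log: "0 < n \<Longrightarrow> real (floor_log n) \<le> log 2 (real n)"
  by (simp add: floor_log_altdef)

definition search_step :: com where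
  "search_step =
     Seq (Assign 6 (Div (Plus (V 4) (V 5)) (N 2)))
    (Seq (Assign 9 (V 6))
    (Seq binom_prog
         (If (Less (V 7) (Plus (V 2) (N 1))) (Assign 4 (V 6)) (Assign 5 (V 6)))))"

definition search_prog :: com where
  "search_prog = While (Less (Plus (V 4) (N 1)) (V 5)) search_step"

definition search_inv :: "state \<Rightarrow> nat \<Rightarrow> nat \<Rightarrow> nat \<Rightarrow> state \<Rightarrow> bool" where
  "search_inv s0 n k i s \<longleftrightarrow> (\<forall>r<4. fst s r = fst s0 r) \<and> snd s = snd s0 \<and>
     (\<exists>lo hi. fst s 4 = int lo \<and> fst s 5 = int hi \<and> lo < hi \<and> hi \<le> n \<and>
        multichoose lo k \<le> i \<and> (hi = n \<or> i < multichoose hi k))"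

text \<open>The bit length of \<open>hi - lo - 1\<close>, which drops with every bisection.\<close>

definition search_measure :: "state \<Rightarrow> nat" where
  "search_measure s = floor_log (2 * nat (fst s 5 - fst s 4 - 1))"

lemma search_step_spec:
  assumes "fst s0 1 = int k" "fst s0 2 = int i"
  shows "hoare_time
     (\<lambda>s. search_inv s0 n k i s \<and> bval (Less (Plus (V 4) (N 1)) (V 5)) s \<and> search_measure s = v)
     search_step (\<lambda>s. search_inv s0 n k i s \<and> search_measure s < v) (30 + 20 * k)"
proof (rule hoare_time_pointwise)
  fix s assume s: "search_inv s0 n k i s \<and> bval (Less (Plus (V 4) (N 1)) (V 5)) s \<and>
    search_measure s = v"
  then obtain lo hi where lo_hi: "fst s 4 = int lo" "fst s 5 = int hi" "lo + 1 < hi" "hi \<le> n"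
      "multichoose lo k \<le> i" "hi = n \<or> i < multichoose hi k"
    and unchanged: "\<forall>r<4. fst s r = fst s0 r" "snd s = snd s0"
    unfolding search_inv_def by auto
  have v: "v = floor_log (2 * (hi - lo - 1))"
    using s lo_hi unfolding search_measure_def by (simp add: nat_diff_distrib)
  define mid where "mid = (lo + hi) div 2"
  define s1 where "s1 = ((fst s)(6 := int mid, 9 := int mid), snd s)"
  define s2 where "s2 = ((fst s1)(7 := int (multichoose mid k), 8 := int k), snd s1)"
  have regs: "fst s 1 = int k" "fst s 2 = int i"
    using unchanged assms by auto
  have "hoare_time (\<lambda>s. s = s2)
      (If (Less (V 7) (Plus (V 2) (N 1))) (Assign 4 (V 6)) (Assign 5 (V 6)))
      (\<lambda>s. search_inv s0 n k i s \<and> search_measure s < v) 8"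
  proof (rule hoare_time_If[OF hoare_time_Assign hoare_time_Assign], goal_cases)
    case (1 s')
    then have "multichoose mid k \<le> i"
      using regs by (auto simp: s2_def s1_def)
    moreover have "floor_log (2 * (hi - mid - 1)) < floor_log (2 * (hi - lo - 1))"
      using lo_hi(3) by (intro floor_log_double_less) (auto simp: mid_def)
    ultimately show ?case
      using 1 lo_hi unchanged unfolding search_inv_def search_measure_def v
      by (auto simp: s2_def s1_def mid_def nat_diff_distrib)
  next
    case (2 s')
    then have "i < multichoose mid k"
      using regs by (auto simp: s2_def s1_def)
    moreover have "floor_log (2 * (mid - lo - 1)) < floor_log (2 * (hi - lo - 1))"
      using lo_hi(3) by (intro floor_log_double_less) (auto simp: mid_def)
    ultimately show ?case
      using 2 lo_hi unchanged unfolding search_inv_def search_measure_def v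
      by (auto simp: s2_def s1_def mid_def nat_diff_distrib)
  qed simp
  moreover have "hoare_time (\<lambda>s. s = s1) binom_prog (\<lambda>s. s = s2) (10 + 20 * k)"
    unfolding s2_def using regs by (intro binom_prog_spec) (auto simp: s1_def)
  moreover have "(int lo + int hi) div 2 = int mid"
    by (simp add: mid_def zdiv_int)
  ultimately show "hoare_time (\<lambda>s'. s' = s) search_step
      (\<lambda>s. search_inv s0 n k i s \<and> search_measure s < v) (30 + 20 * k)"
    unfolding search_step_def using lo_hi
    by (intro hoare_time_Seq[OF hoare_time_Assign hoare_time_Seq[OF hoare_time_Assign_wp
          hoare_time_Seq]]) (auto simp: s1_def)
qed

lemma search_prog_spec:
  assumes "fst s0 1 = int k" "fst s0 2 = int i" "fst s0 4 = 0" "fst s0 5 = int n"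
    and "k \<noteq> 0" "n \<noteq> 0"
  shows "hoare_time (\<lambda>s. s = s0) search_prog
     (\<lambda>s. (\<forall>r<4. fst s r = fst s0 r) \<and> snd s = snd s0 \<and>
        (\<exists>a. fst s 4 = int a \<and> a < n \<and> multichoose a k \<le> i \<and>
             (Suc a = n \<or> i < multichoose (Suc a) k)))
     (6 + Suc (floor_log n) * (36 + 20 * k))"
  unfolding search_prog_def
proof (rule hoare_time_While[OF search_step_spec[OF assms(1,2)]])
  fix s assume "s = s0"
  have "search_measure s0 = floor_log (2 * (n - 1))"
    using assms(3,4) by (simp add: search_measure_def nat_diff_distrib')
  also have "\<dots> \<le> Suc (floor_log n)"
    using floor_log_le_iff[of "2 * (n - 1)" "2 * n"] assms(6) by simp
  finally show "search_inv s0 n k i s \<and> search_measure s \<le> Suc (floor_log n)"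
    using \<open>s = s0\<close> assms unfolding search_inv_def by (auto intro!: exI[of _ 0] exI[of _ n])
next
  fix s assume "search_inv s0 n k i s" "\<not> bval (Less (Plus (V 4) (N 1)) (V 5)) s"
  then obtain lo hi where "fst s 4 = int lo" "fst s 5 = int hi" "lo < hi" "\<not> lo + 1 < hi"
      "hi \<le> n" "multichoose lo k \<le> i" "hi = n \<or> i < multichoose hi k"
    and "\<forall>r<4. fst s r = fst s0 r" "snd s = snd s0"
    unfolding search_inv_def by auto
  moreover from this have "hi = Suc lo"
    by simp
  ultimately show "(\<forall>r<4. fst s r = fst s0 r) \<and> snd s = snd s0 \<and>
      (\<exists>a. fst s 4 = int a \<and> a < n \<and> multichoose a k \<le> i \<and>
           (Suc a = n \<or> i < multichoose (Suc a) k))"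
    by auto
qed simp

section \<open>Unranking\<close>

definition store_prog :: com where
  "store_prog =
     Seq (AssignArr 0 (V 3) (V 4))
    (Seq (Assign 3 (Plus (V 3) (N 1)))
    (Seq (Assign 2 (Minus (V 2) (V 7)))
    (Seq (Assign 0 (Plus (V 4) (N 1)))
         (Assign 1 (Minus (V 1) (N 1))))))"

definition emit_prog :: com where
  "emit_prog = Seq (Assign 9 (V 4)) (Seq binom_prog store_prog)"

lemma emit_prog_spec:
  assumes regs: "fst s0 1 = int (Suc k)" "fst s0 2 = int j" "fst s0 3 = int (length p)"
      "fst s0 4 = int a"
    and "multichoose a (Suc k) \<le> j" "\<forall>r<length p. snd s0 0 (int r) = p ! r"
  shows "hoare_time (\<lambda>s. s = s0) emit_prog
     (\<lambda>s. fst s 0 = int (Suc a) \<and> fst s 1 = int k \<and> fst s 2 = int (j - multichoose a (Suc k)) \<and>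
        fst s 3 = int (length (p @ [int a])) \<and>
        (\<forall>r<length (p @ [int a]). snd s 0 (int r) = (p @ [int a]) ! r))
     (37 + 20 * Suc k)" (is "hoare_time _ _ ?post _")
proof -
  define s1 where "s1 = ((fst s0)(9 := int a), snd s0)"
  define s2 where "s2 = ((fst s1)(7 := int (multichoose a (Suc k)), 8 := int (Suc k)), snd s1)"
  have "hoare_time (\<lambda>s. s = s1) binom_prog (\<lambda>s. s = s2) (10 + 20 * Suc k)"
    unfolding s2_def using regs by (intro binom_prog_spec) (auto simp: s1_def)
  moreover have "hoare_time (\<lambda>s. s = s2) store_prog ?post 23"
    unfolding store_prog_def
  proof (rule hoare_time_Seq[OF hoare_time_AssignArr hoare_time_Seq[OF hoare_time_Assign_wp
        hoare_time_Seq[OF hoare_time_Assign_wp hoare_time_Seq[OF hoare_time_Assign_wp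
          hoare_time_Assign_wp]]]], goal_cases)
    case (1 s)
    then show ?case
      using assms by (auto simp: s2_def s1_def nth_append of_nat_diff)
  qed (rule order.refl | simp)+
  ultimately show ?thesis
    unfolding emit_prog_def using regs
    by (intro hoare_time_Seq[OF hoare_time_Assign hoare_time_Seq]) (auto simp: s1_def)
qed

definition unrank_inv :: "nat \<Rightarrow> nat \<Rightarrow> nat \<Rightarrow> state \<Rightarrow> bool" where
  "unrank_inv n k i s \<longleftrightarrow> (\<exists>m K j p.
     fst s 0 = int m \<and> fst s 1 = int K \<and> fst s 2 = int j \<and> fst s 3 = int (length p) \<and>
     0 < m \<and> m \<le> n \<and> length p + K = k \<and> j < multichoose m K \<and>
     (\<forall>r<length p. snd s 0 (int r) = p ! r) \<and>
     (\<forall>ys\<in>msets_seq m K. mset_rank m K ys = j \<longrightarrow>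
        p @ ys \<in> msets_seq n k \<and> mset_rank n k (p @ ys) = i))"

lemma emit_prog_unrank_inv:
  assumes regs: "fst s0 1 = int (Suc K)" "fst s0 2 = int j" "fst s0 3 = int (length p)"
      "fst s0 4 = int a"
    and prefix: "\<forall>r<length p. snd s0 0 (int r) = p ! r"
    and "a < m" "m \<le> n" "length p + Suc K = k"
    and a: "multichoose a (Suc K) \<le> j" "Suc a = m \<or> j < multichoose (Suc a) (Suc K)"
    and j: "j < multichoose m (Suc K)"
    and completions: "\<forall>ys\<in>msets_seq m (Suc K). mset_rank m (Suc K) ys = j \<longrightarrow>
        p @ ys \<in> msets_seq n k \<and> mset_rank n k (p @ ys) = i"
  shows "hoare_time (\<lambda>s. s = s0) emit_prog
     (\<lambda>s. unrank_inv n k i s \<and> nat (fst s 1) < Suc K) (37 + 20 * Suc K)"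
proof (rule hoare_time_conseq[OF emit_prog_spec[OF regs a(1) prefix]])
  note extended = unrank_prefix_step[OF \<open>a < m\<close> a j completions]
  fix s :: state
  assume post: "fst s 0 = int (Suc a) \<and> fst s 1 = int K \<and>
    fst s 2 = int (j - multichoose a (Suc K)) \<and> fst s 3 = int (length (p @ [int a])) \<and>
    (\<forall>r<length (p @ [int a]). snd s 0 (int r) = (p @ [int a]) ! r)"
  have "unrank_inv n k i s"
    unfolding unrank_inv_def
    by (rule exI[of _ "Suc a"], rule exI[of _ K], rule exI[of _ "j - multichoose a (Suc K)"],
        rule exI[of _ "p @ [int a]"]) (use post extended assms(6-8) in auto)
  with post show "unrank_inv n k i s \<and> nat (fst s 1) < Suc K"
    by simp
qed simp_all

definition unrank_step :: com where
  "unrank_step = Seq (Seq (Assign 4 (N 0)) (Assign 5 (V 0))) (Seq search_prog emit_prog)"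

definition unrank_prog :: com where
  "unrank_prog = While (Less (N 0) (V 1)) unrank_step"

lemma unrank_step_spec:
  "hoare_time (\<lambda>s. unrank_inv n k i s \<and> bval (Less (N 0) (V 1)) s \<and> nat (fst s 1) = v)
     unrank_step (\<lambda>s. unrank_inv n k i s \<and> nat (fst s 1) < v)
     (50 + 20 * k + Suc (floor_log n) * (36 + 20 * k))"
proof (rule hoare_time_pointwise)
  fix s0 assume "unrank_inv n k i s0 \<and> bval (Less (N 0) (V 1)) s0 \<and> nat (fst s0 1) = v"
  then obtain m K j p where regs: "fst s0 0 = int m" "fst s0 1 = int (Suc K)" "fst s0 2 = int j"
      "fst s0 3 = int (length p)"
    and m: "0 < m" "m \<le> n" and K: "length p + Suc K = k" "v = Suc K"
    and j: "j < multichoose m (Suc K)"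
    and prefix: "\<forall>r<length p. snd s0 0 (int r) = p ! r"
    and completions: "\<forall>ys\<in>msets_seq m (Suc K). mset_rank m (Suc K) ys = j \<longrightarrow>
        p @ ys \<in> msets_seq n k \<and> mset_rank n k (p @ ys) = i"
    unfolding unrank_inv_def by (auto simp: gr0_conv_Suc simp del: of_nat_Suc)
  define s1 where "s1 = ((fst s0)(4 := 0, 5 := int m), snd s0)"
  define found where "found s \<longleftrightarrow> (\<forall>r<4. fst s r = fst s1 r) \<and> snd s = snd s1 \<and>
     (\<exists>a. fst s 4 = int a \<and> a < m \<and> multichoose a (Suc K) \<le> j \<and>
          (Suc a = m \<or> j < multichoose (Suc a) (Suc K)))" for s
  have "hoare_time (\<lambda>s. s = s1) search_prog found (6 + Suc (floor_log n) * (36 + 20 * k))"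
  proof (rule hoare_time_conseq[OF search_prog_spec[of s1 "Suc K" j m]])
    have "Suc (floor_log m) * (36 + 20 * Suc K) \<le> Suc (floor_log n) * (36 + 20 * k)"
      using floor_log_le_iff[OF m(2)] K(1) by (intro mult_mono) auto
    then show "6 + Suc (floor_log m) * (36 + 20 * Suc K) \<le> 6 + Suc (floor_log n) * (36 + 20 * k)"
      by simp
  qed (use regs m in \<open>auto simp: s1_def found_def\<close>)
  moreover have "hoare_time found emit_prog
      (\<lambda>s. unrank_inv n k i s \<and> nat (fst s 1) < v) (37 + 20 * k)"
  proof (rule hoare_time_pointwise)
    fix s2 assume "found s2"
    then obtain a where "fst s2 4 = int a" "a < m" "multichoose a (Suc K) \<le> j"
        "Suc a = m \<or> j < multichoose (Suc a) (Suc K)"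
      and "\<forall>r<4. fst s2 r = fst s1 r" "snd s2 = snd s1"
      unfolding found_def by blast
    with regs m K j prefix completions show "hoare_time (\<lambda>s. s = s2) emit_prog
        (\<lambda>s. unrank_inv n k i s \<and> nat (fst s 1) < v) (37 + 20 * k)"
      by (intro hoare_time_conseq[OF emit_prog_unrank_inv[of s2 K j p a m n k i]])
        (auto simp: s1_def)
  qed
  ultimately show "hoare_time (\<lambda>s. s = s0) unrank_step
      (\<lambda>s. unrank_inv n k i s \<and> nat (fst s 1) < v) (50 + 20 * k + Suc (floor_log n) * (36 + 20 * k))"
    unfolding unrank_step_def using regs
    by (intro hoare_time_Seq[OF hoare_time_Seq[OF hoare_time_Assign hoare_time_Assign_wp]
          hoare_time_Seq]) (auto simp: s1_def)
qed

lemma unrank_prog_spec: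
  assumes "0 < n" "i < multichoose n k"
  shows "hoare_time (\<lambda>s. s = init_state n k i) unrank_prog
     (\<lambda>s. output_seq k s \<in> msets_seq n k \<and> mset_rank n k (output_seq k s) = i)
     (4 + k * (54 + 20 * k + Suc (floor_log n) * (36 + 20 * k)))"
  unfolding unrank_prog_def
proof (rule hoare_time_While[where \<mu> = "\<lambda>s. nat (fst s 1)" and M = k, OF unrank_step_spec])
  fix s assume init: "s = init_state n k i"
  have "unrank_inv n k i s"
    unfolding unrank_inv_def
    by (rule exI[of _ n], rule exI[of _ k], rule exI[of _ i], rule exI[of _ "[]"])
      (use init assms in \<open>auto simp: init_state_def multichoose_def\<close>)
  with init show "unrank_inv n k i s \<and> nat (fst s 1) \<le> k"
    by (simp add: init_state_def)
next
  fix s assume "unrank_inv n k i s" "\<not> bval (Less (N 0) (V 1)) s"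
  then obtain m j p where "length p = k" "j < multichoose m 0"
      "\<forall>r<length p. snd s 0 (int r) = p ! r"
      "\<forall>ys\<in>msets_seq m 0. mset_rank m 0 ys = j \<longrightarrow>
         p @ ys \<in> msets_seq n k \<and> mset_rank n k (p @ ys) = i"
    unfolding unrank_inv_def by force
  moreover from this have "output_seq k s = p"
    unfolding output_seq_def by (intro nth_equalityI) auto
  ultimately show "output_seq k s \<in> msets_seq n k \<and> mset_rank n k (output_seq k s) = i"
    by simp
qed simp

lemma unrank_time_bound:
  assumes "0 < n"
  shows "real (4 + k * (54 + 20 * k + Suc (floor_log n) * (36 + 20 * k)))
           \<le> 134 * (1 + real k ^ 2 * (1 + log 2 (real n)))"
proof -
  define L where "L = 1 + log 2 (real n)"
  define B where "B = real (Suc (floor_log n))"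
  have "0 \<le> B" "B \<le> L" "1 \<le> L"
    using floor_log_le_log[OF assms] assms by (simp_all add: B_def L_def)
  have k: "real k \<le> real k ^ 2"
    by (cases k) (simp_all add: power2_eq_square)
  have k2L: "real k ^ 2 \<le> real k ^ 2 * L"
    using \<open>1 \<le> L\<close> by (simp add: mult_le_cancel_left1)
  with k have kL: "real k \<le> real k ^ 2 * L"
    by linarith
  have kB: "real k * B \<le> real k ^ 2 * L" and k2B: "real k ^ 2 * B \<le> real k ^ 2 * L"
    using \<open>0 \<le> B\<close> \<open>B \<le> L\<close> k by (auto intro: mult_mono)
  have "real (4 + k * (54 + 20 * k + Suc (floor_log n) * (36 + 20 * k)))
      = 4 + 54 * real k + 20 * real k ^ 2 + 36 * (real k * B) + 20 * (real k ^ 2 * B)"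
    by (simp add: B_def algebra_simps power2_eq_square)
  also have "\<dots> \<le> 134 * (1 + real k ^ 2 * L)"
    using kL k2L kB k2B zero_le_power2[of "real k"] unfolding distrib_left by linarith
  finally show ?thesis
    by (simp add: L_def)
qed

theorem lemma3p3:
  shows "\<exists>prog :: com. \<exists>C :: real. \<forall>n k i :: nat.
           n \<ge> 1 \<longrightarrow> i < (n - 1 + k) choose k \<longrightarrow>
           (\<exists>t s'. big_step (prog, init_state n k i) t s' \<and>
                   output_seq k s' \<in> msets_seq n k \<and>
                   mset_rank n k (output_seq k s') = i \<and>
                   real t \<le> C * (1 + real k ^ 2 * (1 + log 2 (real n))))"
proof (rule exI[of _ unrank_prog], rule exI[of _ 134], intro allI impI)
  fix n k i :: nat
  assume "n \<ge> 1" "i < (n - 1 + k) choose k"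
  then have n: "0 < n" and i: "i < multichoose n k"
    by (simp_all add: multichoose_def add.commute)
  from unrank_prog_spec[OF n i] obtain t s' where run: "big_step (unrank_prog, init_state n k i) t s'"
      "output_seq k s' \<in> msets_seq n k \<and> mset_rank n k (output_seq k s') = i"
      "t \<le> 4 + k * (54 + 20 * k + Suc (floor_log n) * (36 + 20 * k))"
    unfolding hoare_time_def by blast
  moreover have "real t \<le> 134 * (1 + real k ^ 2 * (1 + log 2 (real n)))"
    using run(3) unrank_time_bound[OF n, of k] by (meson of_nat_le_iff order.trans)
  ultimately show "\<exists>t s'. big_step (unrank_prog, init_state n k i) t s' \<and>
      output_seq k s' \<in> msets_seq n k \<and> mset_rank n k (output_seq k s') = i \<and>
      real t \<le> 134 * (1 + real k ^ 2 * (1 + log 2 (real n)))"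
    by blast
qed

end
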